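(* For every positive integer $n$, any deterministic finite automaton separating $\mathrm{EvenCycles}_{n,2}$ from $\mathrm{OddCycles}_{n,2}$ has at least $n+1$ states.
   Context: Let $\Sigma=[n]\times[d]$ where $[m]=\{1,\dots,m\}$. A deterministic finite automaton over $\Sigma$ consists of a finite set $Q$ of states, an initial state $q_{start}\in Q$ and a transition function $\delta\colon Q\times\Sigma\to Q$, extended to words in the usual way. For disjoint $A,B\subseteq\Sigma^{\mathbb N}$, the automaton separates $A$ from $B$ if there is a state $q_{accept}$ such that for every infinite word $w=w_1w_2\ldots\in\Sigma^{\mathbb N}$: if $w\in A$ then there is $i_0$ with $\delta(q_{start},w_1\ldots w_i)=q_{accept}$ for all $i\ge i_0$; if $w\in B$ then $\delta(q_{start},w_1\ldots w_i)\neq q_{accept}$ for all $i\ge 1$. A game graph with $n$ nodes and $d$ priorities is a pair $G=\langle E,\pi\rangle$ where $E\subseteq[n]^2$ is a set of directed edges (loops allowed, no parallel edges) such that every node $u\in[n]$ has at least one outgoing edge, and $\pi\colon E\to[d]$. $G$ is even (resp. odd) if for every $k\ge1$ and every $v_1,\dots,v_k$ with $(v_1,v_2),\dots,(v_{k-1},v_k),(v_k,v_1)\in E$, the maximum of $\pi$ over these $k$ edges is even (resp. odd). $\mathrm{EvenCycles}_{n,d}$ (resp. $\mathrm{OddCycles}_{n,d}$) is the set of infinite words $(v_1,l_1)(v_2,l_2)\ldots\in\Sigma^{\mathbb N}$ for which there exists an even (resp. odd) game graph $G=\langle E,\pi\rangle$ with at most $n$ nodes and $d$ priorities such that $(v_i,v_{i+1})\in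 E$ and $\pi((v_i,v_{i+1}))=l_i$ for all $i\ge1$. *)

theory Defs
  imports Main
begin

definition alphabet :: "nat \<Rightarrow> nat \<Rightarrow> (nat \<times> nat) set" where
  "alphabet n d = {1..n} \<times> {1..d}"

text \<open>Infinite words are sequences indexed from 0: the word w_1 w_2 ... is w 0, w 1, ....
  run delta q w i is the state reached from q after reading the first i letters.\<close>
fun run :: "('q \<Rightarrow> 'a \<Rightarrow> 'q) \<Rightarrow> 'q \<Rightarrow> (nat \<Rightarrow> 'a) \<Rightarrow> nat \<Rightarrow> 'q" where
  "run \<delta> q w 0 = q"
| "run \<delta> q w (Suc i) = \<delta> (run \<delta> q w i) (w i)"

definition is_dfa :: "nat \<Rightarrow> nat \<Rightarrow> 'q set \<Rightarrow> 'q \<Rightarrow> ('q \<Rightarrow> nat \<times> nat \<Rightarrow> 'q) \<Rightarrow> bool" where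
  "is_dfa n d Q q0 \<delta> \<longleftrightarrow> finite Q \<and> q0 \<in> Q \<and>
     (\<forall>q\<in>Q. \<forall>a\<in>alphabet n d. \<delta> q a \<in> Q)"

definition separates ::
  "nat \<Rightarrow> nat \<Rightarrow> 'q set \<Rightarrow> 'q \<Rightarrow> ('q \<Rightarrow> nat \<times> nat \<Rightarrow> 'q)
    \<Rightarrow> (nat \<Rightarrow> nat \<times> nat) set \<Rightarrow> (nat \<Rightarrow> nat \<times> nat) set \<Rightarrow> bool" where
  "separates n d Q q0 \<delta> A B \<longleftrightarrow>
     (\<exists>qa\<in>Q. \<forall>w. (\<forall>i. w i \<in> alphabet n d) \<longrightarrow>
        ((w \<in> A \<longrightarrow> (\<exists>i0. \<forall>i\<ge>i0. run \<delta> q0 w i = qa)) \<and>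
         (w \<in> B \<longrightarrow> (\<forall>i\<ge>1. run \<delta> q0 w i \<noteq> qa))))"

definition game_graph :: "nat \<Rightarrow> nat \<Rightarrow> (nat \<times> nat) set \<Rightarrow> (nat \<times> nat \<Rightarrow> nat) \<Rightarrow> bool" where
  "game_graph m d E \<pi> \<longleftrightarrow> E \<subseteq> {1..m} \<times> {1..m} \<and>
     (\<forall>u\<in>{1..m}. \<exists>v. (u, v) \<in> E) \<and> (\<forall>e\<in>E. \<pi> e \<in> {1..d})"

text \<open>Cycle v_1 .. v_k (k >= 1) given as vs 0 .. vs (k-1); edges (vs j, vs ((j+1) mod k)).\<close>
definition is_cycle :: "(nat \<times> nat) set \<Rightarrow> nat \<Rightarrow> (nat \<Rightarrow> nat) \<Rightarrow> bool" where
  "is_cycle E k vs \<longleftrightarrow> k \<ge> 1 \<and> (\<forall>j<k. (vs j, vs (Suc j mod k)) \<in> E)"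

definition cycle_max :: "(nat \<times> nat \<Rightarrow> nat) \<Rightarrow> nat \<Rightarrow> (nat \<Rightarrow> nat) \<Rightarrow> nat" where
  "cycle_max \<pi> k vs = Max {\<pi> (vs j, vs (Suc j mod k)) | j. j < k}"

definition even_graph :: "(nat \<times> nat) set \<Rightarrow> (nat \<times> nat \<Rightarrow> nat) \<Rightarrow> bool" where
  "even_graph E \<pi> \<longleftrightarrow> (\<forall>k vs. is_cycle E k vs \<longrightarrow> even (cycle_max \<pi> k vs))"

definition odd_graph :: "(nat \<times> nat) set \<Rightarrow> (nat \<times> nat \<Rightarrow> nat) \<Rightarrow> bool" where
  "odd_graph E \<pi> \<longleftrightarrow> (\<forall>k vs. is_cycle E k vs \<longrightarrow> odd (cycle_max \<pi> k vs))"

definition follows :: "(nat \<times> nat) set \<Rightarrow> (nat \<times> nat \<Rightarrow> nat) \<Rightarrow> (nat \<Rightarrow> nat \<times> nat) \<Rightarrow> bool" where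
  "follows E \<pi> w \<longleftrightarrow> (\<forall>i. (fst (w i), fst (w (Suc i))) \<in> E \<and>
                           \<pi> (fst (w i), fst (w (Suc i))) = snd (w i))"

definition EvenCycles :: "nat \<Rightarrow> nat \<Rightarrow> (nat \<Rightarrow> nat \<times> nat) set" where
  "EvenCycles n d = {w. (\<forall>i. w i \<in> alphabet n d) \<and>
     (\<exists>m E \<pi>. m \<le> n \<and> game_graph m d E \<pi> \<and> even_graph E \<pi> \<and> follows E \<pi> w)}"

definition OddCycles :: "nat \<Rightarrow> nat \<Rightarrow> (nat \<Rightarrow> nat \<times> nat) set" where
  "OddCycles n d = {w. (\<forall>i. w i \<in> alphabet n d) \<and>
     (\<exists>m E \<pi>. m \<le> n \<and> game_graph m d E \<pi> \<and> odd_graph E \<pi> \<and> follows E \<pi> w)}"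

end

theory Submission
  imports Defs
begin

text \<open>Let r t be the state reached after reading the staircase word (1,2)(2,2)(3,2)..., which
  climbs through the nodes 1, 2, 3, ... with priority 2. For 1 \<le> k < n, climbing to node k+1 and
  then looping there with priority 1 is an odd play whose run passes through r k, so r k is not the
  accepting state. If r i = r j for some i < j \<le> n, the automaton cannot tell the staircase from the
  lasso that returns from node j to node i+1 forever; this lasso is even (all priorities are 2),
  so its run, which cycles through r i, r (i+1), ..., r (j-1), must settle in the accepting
  state, forcing r i = r (i+1) = accepting with one of i, i+1 in [1, n-1]. Hence for n \<ge> 2 the
  states r 0, ..., r n are pairwise distinct; for n = 1 the loop at node 1 with priority 1 shows
  that the accepting state differs from the state reached after (1,1).\<close>

lemma run_cong:
  assumes "\<forall>i<t. w i = w' i"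
  shows "run \<delta> q w t = run \<delta> q w' t"
  using assms by (induction t) auto

lemma run_in_dfa_states:
  assumes "is_dfa n d Q q0 \<delta>" "q \<in> Q" "\<forall>i<t. w i \<in> alphabet n d"
  shows "run \<delta> q w t \<in> Q"
  using assms by (induction t) (auto simp: is_dfa_def)

fun lasso :: "nat \<Rightarrow> nat \<Rightarrow> nat \<Rightarrow> nat" where
  "lasso i j 0 = 0"
| "lasso i j (Suc t) = (if Suc (lasso i j t) < j then Suc (lasso i j t) else i)"

lemma lasso_less: "i < j \<Longrightarrow> lasso i j t < j"
  by (induction t) auto

lemma lasso_returns:
  assumes "i < j"
  shows "lasso i j (i + c * (j - i)) = i"
proof (induction c)
  case 0
  have "t \<le> i \<Longrightarrow> lasso i j t = t" for t
    using assms by (induction t) auto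
  then show ?case by simp
next
  case (Suc c)
  define m where "m = i + c * (j - i)"
  have "s < j - i \<Longrightarrow> lasso i j (m + s) = i + s" for s
    using Suc.IH by (induction s) (auto simp: m_def)
  from this[of "j - i - 1"] assms have "lasso i j (m + (j - i - 1)) = j - 1"
    by simp
  then have "lasso i j (Suc (m + (j - i - 1))) = i"
    using assms by simp
  moreover have "Suc (m + (j - i - 1)) = i + Suc c * (j - i)"
    using assms by (simp add: m_def)
  ultimately show ?case by metis
qed

lemma run_comp_lasso:
  assumes "i < j" "run \<delta> q u i = run \<delta> q u j"
  shows "run \<delta> q (u \<circ> lasso i j) t = run \<delta> q u (lasso i j t)"
proof (induction t)
  case (Suc t)
  show ?case
  proof (cases "Suc (lasso i j t) < j")
    case False
    then have "Suc (lasso i j t) = j" using lasso_less[OF assms(1)] by (metis Suc_lessI)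
    then have "run \<delta> q u (lasso i j (Suc t)) = run \<delta> q u (Suc (lasso i j t))"
      using False assms(2) by simp
    with Suc.IH show ?thesis by simp
  qed (use Suc.IH in simp)
qed simp

lemma cycle_max_in:
  assumes "is_cycle E k vs"
  shows "\<exists>j<k. cycle_max \<pi> k vs = \<pi> (vs j, vs (Suc j mod k))"
proof -
  have "{\<pi> (vs j, vs (Suc j mod k)) | j. j < k} = (\<lambda>j. \<pi> (vs j, vs (Suc j mod k))) ` {..<k}"
    by auto
  moreover have "k \<ge> 1" using assms by (simp add: is_cycle_def)
  ultimately show ?thesis
    unfolding cycle_max_def using Max_in[of "(\<lambda>j. \<pi> (vs j, vs (Suc j mod k))) ` {..<k}"]
    by fastforce
qed

lemma even_graph_if_priorities_even:
  assumes "\<forall>e\<in>E. even (\<pi> e)"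
  shows "even_graph E \<pi>"
  unfolding even_graph_def
proof (intro allI impI)
  fix k vs assume cyc: "is_cycle E k vs"
  then obtain j where "j < k" "cycle_max \<pi> k vs = \<pi> (vs j, vs (Suc j mod k))"
    using cycle_max_in by blast
  with cyc assms show "even (cycle_max \<pi> k vs)" by (simp add: is_cycle_def)
qed

lemma cycle_edge_loop_if_ascending:
  assumes asc: "\<forall>(a, b)\<in>E. a \<le> b" and cyc: "is_cycle E k vs" and "j < k"
  shows "vs (Suc j mod k) = vs j"
proof -
  have k: "k \<ge> 1" and edge: "\<And>j. j < k \<Longrightarrow> (vs j, vs (Suc j mod k)) \<in> E"
    using cyc by (auto simp: is_cycle_def)
  have step: "vs (x mod k) \<le> vs (Suc x mod k)" for x
    using asc edge[of "x mod k"] k by (auto simp: mod_Suc_eq)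
  have climb: "vs (x mod k) \<le> vs ((x + d) mod k)" for x d
  proof (induction d)
    case (Suc d)
    then show ?case using step[of "x + d"] by simp
  qed simp
  have "Suc j + (k - 1) = j + k" using k by simp
  then have "vs (Suc j mod k) \<le> vs j"
    using climb[of "Suc j" "k - 1"] \<open>j < k\<close> by simp
  moreover have "vs j \<le> vs (Suc j mod k)" using asc edge[OF \<open>j < k\<close>] by auto
  ultimately show ?thesis by simp
qed

lemma odd_graph_if_ascending:
  assumes asc: "\<forall>(a, b)\<in>E. a \<le> b" and loops: "\<forall>a. (a, a) \<in> E \<longrightarrow> odd (\<pi> (a, a))"
  shows "odd_graph E \<pi>"
  unfolding odd_graph_def
proof (intro allI impI)
  fix k vs assume cyc: "is_cycle E k vs"
  then obtain j where j: "j < k" "cycle_max \<pi> k vs = \<pi> (vs j, vs (Suc j mod k))"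
    using cycle_max_in by blast
  have "(vs j, vs j) \<in> E"
    using cyc j cycle_edge_loop_if_ascending[OF asc cyc] by (metis is_cycle_def)
  with j loops cycle_edge_loop_if_ascending[OF asc cyc] show "odd (cycle_max \<pi> k vs)"
    by simp
qed

definition staircase :: "nat \<Rightarrow> nat \<times> nat" where
  "staircase t = (Suc t, 2)"

definition staircase_loop :: "nat \<Rightarrow> nat \<Rightarrow> nat \<times> nat" where
  "staircase_loop k t = (if t < k then staircase t else (Suc k, 1))"

lemma staircase_loop_OddCycles:
  assumes "k < n"
  shows "staircase_loop k \<in> OddCycles n 2"
proof -
  define E where "E = {(a, b). 1 \<le> a \<and> a \<le> Suc k \<and> b = min (Suc a) (Suc k)}"
  define \<pi> where "\<pi> = (\<lambda>e :: nat \<times> nat. if fst e = snd e then 1 else (2 :: nat))"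
  have "game_graph (Suc k) 2 E \<pi>"
    unfolding game_graph_def E_def \<pi>_def by auto
  moreover have "odd_graph E \<pi>"
    by (rule odd_graph_if_ascending) (auto simp: E_def \<pi>_def)
  moreover have "follows E \<pi> (staircase_loop k)"
    unfolding follows_def E_def \<pi>_def staircase_loop_def staircase_def by auto
  moreover have "\<forall>t. staircase_loop k t \<in> alphabet n 2"
    using assms by (auto simp: staircase_loop_def staircase_def alphabet_def)
  ultimately show ?thesis
    unfolding OddCycles_def using assms by (auto intro!: exI[of _ "Suc k"])
qed

lemma staircase_lasso_EvenCycles:
  assumes "i < j" "j \<le> n"
  shows "staircase \<circ> lasso i j \<in> EvenCycles n 2"
proof -
  define E where "E = {(a, b). 1 \<le> a \<and> a \<le> j \<and> b = (if a < j then Suc a else Suc i)}"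
  define \<pi> where "\<pi> = (\<lambda>e :: nat \<times> nat. 2 :: nat)"
  have "game_graph j 2 E \<pi>"
    unfolding game_graph_def E_def \<pi>_def using assms by auto
  moreover have "even_graph E \<pi>"
    by (rule even_graph_if_priorities_even) (simp add: \<pi>_def)
  moreover have "follows E \<pi> (staircase \<circ> lasso i j)"
    unfolding follows_def E_def \<pi>_def staircase_def
    using lasso_less[OF assms(1)] by (auto simp: Suc_le_eq)
  moreover have "\<forall>t. (staircase \<circ> lasso i j) t \<in> alphabet n 2"
    using lasso_less[OF assms(1)] assms(2)
    by (auto simp: staircase_def alphabet_def Suc_le_eq intro: less_le_trans)
  ultimately show ?thesis
    unfolding EvenCycles_def using assms by auto
qed

lemma separates_CyclesE:
  assumes "separates n d Q q0 \<delta> (EvenCycles n d) (OddCycles n d)"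
  obtains qa where "qa \<in> Q"
    and "\<And>w. w \<in> EvenCycles n d \<Longrightarrow> \<exists>t0. \<forall>t\<ge>t0. run \<delta> q0 w t = qa"
    and "\<And>w t. w \<in> OddCycles n d \<Longrightarrow> t \<ge> 1 \<Longrightarrow> run \<delta> q0 w t \<noteq> qa"
  using assms unfolding separates_def EvenCycles_def OddCycles_def by blast

lemma staircase_run_not_accepting:
  assumes odd: "\<And>w t. w \<in> OddCycles n 2 \<Longrightarrow> t \<ge> 1 \<Longrightarrow> run \<delta> q0 w t \<noteq> qa"
    and "1 \<le> k" "k < n"
  shows "run \<delta> q0 staircase k \<noteq> qa"
proof -
  have "run \<delta> q0 staircase k = run \<delta> q0 (staircase_loop k) k"
    by (rule run_cong) (simp add: staircase_loop_def)
  with odd[OF staircase_loop_OddCycles] assms(2,3) show ?thesis by simp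
qed

lemma staircase_run_repeat_accepting:
  assumes even: "\<And>w. w \<in> EvenCycles n 2 \<Longrightarrow> \<exists>t0. \<forall>t\<ge>t0. run \<delta> q0 w t = qa"
    and ij: "i < j" "j \<le> n" and rep: "run \<delta> q0 staircase i = run \<delta> q0 staircase j"
  shows "run \<delta> q0 staircase i = qa \<and> run \<delta> q0 staircase (Suc i) = qa"
proof -
  let ?r = "run \<delta> q0 staircase"
  obtain t0 where t0: "\<And>t. t \<ge> t0 \<Longrightarrow> ?r (lasso i j t) = qa"
    using even[OF staircase_lasso_EvenCycles[OF ij]] run_comp_lasso[OF ij(1) rep] by metis
  define t where "t = i + t0 * (j - i)"
  have "t0 * 1 \<le> t0 * (j - i)" using ij by (intro mult_le_mono2) simp
  then have "t \<ge> t0" unfolding t_def by linarith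
  have at_i: "lasso i j t = i" unfolding t_def using lasso_returns[OF ij(1)] .
  then have "?r i = qa" using t0[OF \<open>t \<ge> t0\<close>] by simp
  moreover have "?r (Suc i) = qa"
  proof (cases "Suc i < j")
    case True
    then show ?thesis using t0[of "Suc t"] \<open>t \<ge> t0\<close> at_i by simp
  next
    case False
    then have "Suc i = j" using ij by simp
    with \<open>?r i = qa\<close> rep show ?thesis by simp
  qed
  ultimately show ?thesis ..
qed

lemma staircase_run_inj_on:
  assumes even: "\<And>w. w \<in> EvenCycles n 2 \<Longrightarrow> \<exists>t0. \<forall>t\<ge>t0. run \<delta> q0 w t = qa"
    and odd: "\<And>w t. w \<in> OddCycles n 2 \<Longrightarrow> t \<ge> 1 \<Longrightarrow> run \<delta> q0 w t \<noteq> qa"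
    and "n \<ge> 2"
  shows "inj_on (run \<delta> q0 staircase) {0..n}"
proof (rule linorder_inj_onI')
  let ?r = "run \<delta> q0 staircase"
  fix i j assume "i \<in> {0..n}" "j \<in> {0..n}" "i < j"
  then have ij: "i < j" "j \<le> n" by auto
  show "?r i \<noteq> ?r j"
  proof
    assume "?r i = ?r j"
    with staircase_run_repeat_accepting[OF even ij] have "?r i = qa" "?r (Suc i) = qa"
      by auto
    moreover have "1 \<le> i \<and> i < n \<or> 1 \<le> Suc i \<and> Suc i < n"
      using \<open>n \<ge> 2\<close> ij by linarith
    moreover have "?r k \<noteq> qa" if "1 \<le> k" "k < n" for k
      using staircase_run_not_accepting[OF odd that] .
    ultimately show False by metis
  qed
qed

theorem proposition5:
  fixes n :: nat and Q :: "'q set" and q0 :: 'q and \<delta> :: "'q \<Rightarrow> nat \<times> nat \<Rightarrow> 'q"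
  assumes "n \<ge> 1"
    and "is_dfa n 2 Q q0 \<delta>"
    and "separates n 2 Q q0 \<delta> (EvenCycles n 2) (OddCycles n 2)"
  shows "card Q \<ge> n + 1"
proof -
  obtain qa where qa: "qa \<in> Q"
    and even: "\<And>w. w \<in> EvenCycles n 2 \<Longrightarrow> \<exists>t0. \<forall>t\<ge>t0. run \<delta> q0 w t = qa"
    and odd: "\<And>w t. w \<in> OddCycles n 2 \<Longrightarrow> t \<ge> 1 \<Longrightarrow> run \<delta> q0 w t \<noteq> qa"
    using separates_CyclesE[OF assms(3)] by blast
  have fin: "finite Q" and q0: "q0 \<in> Q" using assms(2) by (auto simp: is_dfa_def)
  show ?thesis
  proof (cases "n = 1")
    case True
    let ?q = "run \<delta> q0 (staircase_loop 0) 1"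
    have "?q \<noteq> qa" by (rule odd) (use staircase_loop_OddCycles True in auto)
    moreover have "?q \<in> Q"
      by (rule run_in_dfa_states[OF assms(2) q0])
        (use True in \<open>auto simp: staircase_loop_def alphabet_def\<close>)
    ultimately have "card {qa, ?q} \<le> card Q" using qa fin by (intro card_mono) auto
    with \<open>?q \<noteq> qa\<close> True show ?thesis by simp
  next
    case False
    let ?r = "run \<delta> q0 staircase"
    have "inj_on ?r {0..n}" using staircase_run_inj_on[OF even odd] False assms(1) by simp
    moreover have "?r ` {0..n} \<subseteq> Q"
      using run_in_dfa_states[OF assms(2) q0] by (auto simp: staircase_def alphabet_def)
    ultimately have "card {0..n} \<le> card Q" using card_mono[OF fin] card_image by metis
    then show ?thesis by simp
  qed
qed

end
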